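(* In the setting of the context, for every $x\in\mathbb{R}^d$, every integer $\ell\ge2$ and every $t>0$, $$\limsup_{y\to x}\mathbf{1}_{\{t>\tau_\ell(y)\}}\le\mathbf{1}_{\{t\ge\tau_{\ell-1}(x)\}}\qquad\text{almost surely}.$$
   Context: Let $b:\mathbb{R}^d\to\mathbb{R}^d$ be smooth, $A_1,A_2$ constant $d\times d$ matrices, $W$ a $d$-dimensional Brownian motion and $L$ a $d$-dimensional purely jump Lévy process. For each $\ell\in\mathbb{N}$ let $h_\ell:\mathbb{R}^d\to\mathbb{R}$ be a smooth compactly supported function with $h_\ell(x)=1$ for $|x|\le\ell$, and let $X^\ell_t(x)$ be the solution (driven by the same $W$, $L$ for all $\ell$ and $x$) of $$dX^\ell_t=h_\ell(X^\ell_t)b(X^\ell_t)\,dt+A_1\,dW_t+A_2\,dL_t,\qquad X^\ell_0=x.$$ Define $\tau_\ell(x)=\inf\{s>0:X^\ell_s(x)\notin B_\ell\}$, where $B_\ell=\{u\in\mathbb{R}^d:|u|<\ell\}$. *)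

theory Defs
  imports "HOL-Probability.Probability"
begin

coinductive smooth_map :: "('a::real_normed_vector \<Rightarrow> 'b::real_normed_vector) \<Rightarrow> bool" where
  "\<lbrakk>\<forall>x. f differentiable (at x);
    \<forall>v. smooth_map (\<lambda>x. frechet_derivative f (at x) v)\<rbrakk> \<Longrightarrow> smooth_map f"

definition cadlag :: "(real \<Rightarrow> 'b::topological_space) \<Rightarrow> bool" where
  "cadlag f \<longleftrightarrow> (\<forall>t\<ge>0. continuous (at_right t) f) \<and>
                 (\<forall>t>0. \<exists>l. (f \<longlongrightarrow> l) (at_left t))"

definition indep_increments ::
  "'w measure \<Rightarrow> (real \<Rightarrow> 'w \<Rightarrow> real^'d) \<Rightarrow> bool" where
  "indep_increments M Z \<longleftrightarrow>
     (\<forall>(n::nat) (ts::nat \<Rightarrow> real). 0 \<le> ts 0 \<and> (\<forall>i<n. ts i < ts (Suc i)) \<longrightarrow>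
        prob_space.indep_vars M (\<lambda>_. borel) (\<lambda>i \<omega>. Z (ts (Suc i)) \<omega> - Z (ts i) \<omega>) {..<n})"

text \<open>Standard d-dimensional Brownian motion (increments W_t - W_s are
  N(0,(t-s)I), characterised by their characteristic function).\<close>
definition brownian_motion :: "'w measure \<Rightarrow> (real \<Rightarrow> 'w \<Rightarrow> real^'d) \<Rightarrow> bool" where
  "brownian_motion M W \<longleftrightarrow>
     prob_space M \<and> (\<forall>t. W t \<in> borel_measurable M) \<and>
     (\<forall>\<omega>\<in>space M. W 0 \<omega> = 0 \<and> continuous_on {0..} (\<lambda>t. W t \<omega>)) \<and>
     indep_increments M W \<and>
     (\<forall>s t u. 0 \<le> s \<longrightarrow> s \<le> t \<longrightarrow>
        (LINT \<omega>|M. cis (u \<bullet> (W t \<omega> - W s \<omega>))) = complex_of_real (exp (- (t - s) * (norm u)\<^sup>2 / 2)))"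

definition levy_measure :: "(real^'d) measure \<Rightarrow> bool" where
  "levy_measure \<nu> \<longleftrightarrow> sets \<nu> = sets borel \<and> emeasure \<nu> {0} = 0 \<and>
     (\<integral>\<^sup>+ z. ennreal (min 1 ((norm z)\<^sup>2)) \<partial>\<nu>) < \<infinity>"

definition levy_process :: "'w measure \<Rightarrow> (real \<Rightarrow> 'w \<Rightarrow> real^'d) \<Rightarrow> bool" where
  "levy_process M L \<longleftrightarrow>
     prob_space M \<and> (\<forall>t. L t \<in> borel_measurable M) \<and>
     (\<forall>\<omega>\<in>space M. L 0 \<omega> = 0 \<and> cadlag (\<lambda>t. L t \<omega>)) \<and>
     indep_increments M L \<and>
     (\<forall>s t. 0 \<le> s \<longrightarrow> s \<le> t \<longrightarrow>
        distr M borel (\<lambda>\<omega>. L t \<omega> - L s \<omega>) = distr M borel (L (t - s))) \<and>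
     (\<forall>t\<ge>0. \<forall>e>0. ((\<lambda>s. measure M {\<omega>\<in>space M. norm (L s \<omega> - L t \<omega>) > e}) \<longlongrightarrow> 0)
                    (at t within {0..}))"

text \<open>Purely jump Levy process: Levy-Khintchine triplet with zero Gaussian part.\<close>
definition pure_jump_levy_process :: "'w measure \<Rightarrow> (real \<Rightarrow> 'w \<Rightarrow> real^'d) \<Rightarrow> bool" where
  "pure_jump_levy_process M L \<longleftrightarrow> levy_process M L \<and>
     (\<exists>(\<gamma>::real^'d) \<nu>. levy_measure \<nu> \<and>
        (\<forall>t\<ge>0. \<forall>u. (LINT \<omega>|M. cis (u \<bullet> L t \<omega>)) =
           exp (complex_of_real t * (\<i> * complex_of_real (\<gamma> \<bullet> u) +
             (LINT z|\<nu>. cis (u \<bullet> z) - 1 - \<i> * complex_of_real (u \<bullet> z) * indicator (ball 0 1) z)))))"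

text \<open>Exit time inf{s>0 : p s \<notin> B_r}, with inf of the empty set = +infinity.\<close>
definition exit_time :: "(real \<Rightarrow> real^'d) \<Rightarrow> real \<Rightarrow> ereal" where
  "exit_time p r = Inf {ereal s | s. 0 < s \<and> p s \<notin> ball 0 r}"

end

theory Submission
  imports Defs
begin

text \<open>On the event that the path of \<open>X\<^bsub>l-1\<^esub>(x)\<close> stays in \<open>B\<^bsub>l-1\<^esub>\<close> up to time \<open>t\<close>,
  the cut-offs \<open>h\<^bsub>l-1\<^esub>\<close> and \<open>h\<^bsub>l\<^esub>\<close> both equal 1 along it, so \<open>X\<^bsub>l-1\<^esub>(x)\<close> also solves the
  equation with drift \<open>h\<^bsub>l\<^esub> b\<close>. This drift is globally Lipschitz, and the noise enters
  both equations identically, so Gronwall's inequality gives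
  \<open>|X\<^bsub>l\<^esub>(y) - X\<^bsub>l-1\<^esub>(x)| \<le> |y - x| e\<^sup>K\<^sup>s\<close> on \<open>[0, t]\<close>, pathwise. Hence for \<open>y\<close> close to \<open>x\<close>
  the path of \<open>X\<^bsub>l\<^esub>(y)\<close> stays within distance 1 of \<open>B\<^bsub>l-1\<^esub>\<close>, i.e. in \<open>B\<^bsub>l\<^esub>\<close>, and
  \<open>\<tau>\<^bsub>l\<^esub>(y) \<ge> t\<close>. The inequality thus holds for every \<omega>.\<close>

lemma smooth_map_has_derivative:
  assumes "smooth_map f"
  shows "(f has_derivative frechet_derivative f (at x)) (at x)"
  using assms by (cases rule: smooth_map.cases) (simp add: frechet_derivative_works[symmetric])

lemma smooth_map_frechet_derivative:
  assumes "smooth_map f"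
  shows "smooth_map (\<lambda>x. frechet_derivative f (at x) v)"
  using assms by (auto elim: smooth_map.cases)

lemma smooth_map_continuous_on:
  assumes "smooth_map f"
  shows "continuous_on S f"
  using assms
  by (auto elim!: smooth_map.cases intro!: continuous_at_imp_continuous_on
           simp: differentiable_imp_continuous_within)

lemma smooth_map_bounded_on_compact:
  fixes f :: "'a::real_normed_vector \<Rightarrow> 'b::real_normed_vector"
  assumes "smooth_map f" "compact S"
  shows "\<exists>B\<ge>0. \<forall>x\<in>S. norm (f x) \<le> B"
proof -
  have "bounded (f ` S)"
    using assms by (intro compact_imp_bounded compact_continuous_image smooth_map_continuous_on)
  then obtain B where "B > 0" "\<forall>y\<in>f ` S. norm y \<le> B"
    using bounded_pos by metis
  then show ?thesis by (intro exI[of _ B]) auto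
qed

lemma smooth_map_derivative_bounded_on_compact:
  fixes f :: "'a::euclidean_space \<Rightarrow> 'b::real_normed_vector"
  assumes f: "smooth_map f" and "compact S"
  shows "\<exists>B\<ge>0. \<forall>x\<in>S. \<forall>v. norm (frechet_derivative f (at x) v) \<le> B * norm v"
proof -
  obtain Bf where Bf: "\<And>i. i \<in> Basis \<Longrightarrow> Bf i \<ge> 0 \<and> (\<forall>x\<in>S. norm (frechet_derivative f (at x) i) \<le> Bf i)"
    using smooth_map_bounded_on_compact[OF smooth_map_frechet_derivative[OF f] \<open>compact S\<close>] by metis
  define B where "B = (\<Sum>i\<in>Basis. Bf i)"
  have "norm (frechet_derivative f (at x) v) \<le> B * norm v" if "x \<in> S" for x v
  proof -
    let ?D = "frechet_derivative f (at x)"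
    have "linear ?D"
      using smooth_map_has_derivative[OF f] has_derivative_linear by blast
    then have "?D v = (\<Sum>i\<in>Basis. (v \<bullet> i) *\<^sub>R ?D i)"
      by (subst euclidean_representation[of v, symmetric]) (simp add: linear_sum linear_scale o_def)
    then have "norm (?D v) \<le> (\<Sum>i\<in>Basis. norm ((v \<bullet> i) *\<^sub>R ?D i))"
      by (simp only: norm_sum)
    also have "\<dots> = (\<Sum>i\<in>Basis. \<bar>v \<bullet> i\<bar> * norm (?D i))"
      by simp
    also have "\<dots> \<le> (\<Sum>i\<in>Basis. norm v * Bf i)"
      using Bf \<open>x \<in> S\<close> Basis_le_norm by (intro sum_mono mult_mono) auto
    finally show ?thesis by (simp add: B_def sum_distrib_left mult.commute)
  qed
  moreover have "B \<ge> 0" unfolding B_def using Bf by (simp add: sum_nonneg)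
  ultimately show ?thesis by blast
qed

lemma has_derivative_zero_off_support:
  fixes f :: "'a::real_normed_vector \<Rightarrow> 'b::real_normed_vector"
  assumes "{z. f z \<noteq> 0} \<subseteq> ball 0 R" "R < norm x"
  shows "(f has_derivative (\<lambda>v. 0)) (at x)"
proof (rule has_derivative_transform_within_open[where s = "{z. R < norm z}"])
  show "((\<lambda>z. 0) has_derivative (\<lambda>v. 0)) (at x)" by simp
  show "open {z::'a. R < norm z}" by (simp add: open_Collect_less continuous_on_norm_id)
  show "\<And>z. z \<in> {z. R < norm z} \<Longrightarrow> 0 = f z" using assms(1) by force
qed (use assms(2) in simp)

lemma lipschitz_on_UNIV_if_derivative_bounded_on_support:
  fixes f :: "'a::real_normed_vector \<Rightarrow> 'b::real_normed_vector"
  assumes supp: "{z. f z \<noteq> 0} \<subseteq> ball 0 R"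
    and deriv: "\<And>x. norm x \<le> R \<Longrightarrow> (f has_derivative f' x) (at x)"
    and bound: "\<And>x. norm x \<le> R \<Longrightarrow> onorm (f' x) \<le> K" and "K \<ge> 0"
  shows "K-lipschitz_on UNIV f"
proof -
  define D where "D x = (if norm x \<le> R then f' x else (\<lambda>v. 0))" for x
  have "(f has_derivative D x) (at x within UNIV)" for x
    using deriv[of x] has_derivative_zero_off_support[OF supp, of x] by (simp add: D_def)
  moreover have "onorm (D x) \<le> K" for x
    using bound[of x] \<open>K \<ge> 0\<close> by (simp add: D_def onorm_zero)
  ultimately show ?thesis
    using \<open>K \<ge> 0\<close> by (intro bounded_derivative_imp_lipschitz) auto
qed

lemma lipschitz_on_scaleR_bounded_support:
  fixes h :: "'a::euclidean_space \<Rightarrow> real" and b :: "'a \<Rightarrow> 'b::real_normed_vector"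
  assumes h: "smooth_map h" and b: "smooth_map b" and supp: "bounded {z. h z \<noteq> 0}"
  obtains K where "K > 0" "K-lipschitz_on UNIV (\<lambda>z. h z *\<^sub>R b z)"
proof -
  obtain R where R: "{z. h z \<noteq> 0} \<subseteq> ball 0 R"
    using bounded_subset_ballD[OF supp] by blast
  have cball: "compact (cball (0::'a) R)" by simp
  obtain Bh where Bh: "Bh \<ge> 0"
    "\<forall>x\<in>cball 0 R. \<forall>v. norm (frechet_derivative h (at x) v) \<le> Bh * norm v"
    using smooth_map_derivative_bounded_on_compact[OF h cball] by blast
  obtain Bb where Bb: "Bb \<ge> 0"
    "\<forall>x\<in>cball 0 R. \<forall>v. norm (frechet_derivative b (at x) v) \<le> Bb * norm v"
    using smooth_map_derivative_bounded_on_compact[OF b cball] by blast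
  obtain Mh where Mh: "Mh \<ge> 0" "\<forall>x\<in>cball 0 R. norm (h x) \<le> Mh"
    using smooth_map_bounded_on_compact[OF h cball] by blast
  obtain Mb where Mb: "Mb \<ge> 0" "\<forall>x\<in>cball 0 R. norm (b x) \<le> Mb"
    using smooth_map_bounded_on_compact[OF b cball] by blast
  define D where "D x v = h x *\<^sub>R frechet_derivative b (at x) v + frechet_derivative h (at x) v *\<^sub>R b x"
    for x v
  define K where "K = Bh * Mb + Mh * Bb + 1"
  have "onorm (D x) \<le> K" if "norm x \<le> R" for x
  proof (rule onorm_le)
    fix v
    have "norm (D x v) \<le> norm (h x) * norm (frechet_derivative b (at x) v)
                          + norm (frechet_derivative h (at x) v) * norm (b x)"
      using norm_triangle_ineq[of "h x *\<^sub>R frechet_derivative b (at x) v"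
          "frechet_derivative h (at x) v *\<^sub>R b x"]
      by (simp add: D_def)
    also have "\<dots> \<le> Mh * (Bb * norm v) + (Bh * norm v) * Mb"
      using Bh Bb Mh Mb that by (intro add_mono mult_mono) auto
    also have "\<dots> \<le> K * norm v" unfolding K_def by (simp add: algebra_simps)
    finally show "norm (D x v) \<le> K * norm v" .
  qed
  moreover have "((\<lambda>z. h z *\<^sub>R b z) has_derivative D x) (at x)" for x
    using has_derivative_scaleR[OF smooth_map_has_derivative[OF h] smooth_map_has_derivative[OF b]]
    by (simp add: D_def [abs_def])
  moreover have "K > 0" unfolding K_def using Bh Bb Mh Mb by (simp add: add_nonneg_pos)
  moreover have "{z. h z *\<^sub>R b z \<noteq> 0} \<subseteq> ball 0 R" using R by auto
  ultimately show ?thesis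
    using that lipschitz_on_UNIV_if_derivative_bounded_on_support[of "\<lambda>z. h z *\<^sub>R b z" R D K]
    by simp
qed

lemma gronwall_integral_le:
  fixes u :: "real \<Rightarrow> real"
  assumes u: "continuous_on {0..T} u" and "K > 0" "c \<ge> 0"
    and bound: "\<And>s. s \<in> {0..T} \<Longrightarrow> u s \<le> c + K * integral {0..s} u"
    and s: "s \<in> {0..T}"
  shows "u s \<le> c * exp (K * s)"
proof -
  define g where "g = (\<lambda>s. integral {0..s} u)"
  define \<phi> where "\<phi> = (\<lambda>s. exp (- K * s) * (g s + c / K))"
  have g': "(g has_real_derivative u r) (at r)" if "0 < r" "r < T" for r
    using integral_has_real_derivative[OF u, of r] that at_within_Icc_at[of 0 r T]
    by (simp add: g_def)
  have "continuous_on {0..T} g"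
    unfolding g_def by (rule indefinite_integral_continuous_1[OF integrable_continuous_real[OF u]])
  then have "continuous_on {0..s} g"
    by (rule continuous_on_subset) (use s in auto)
  then have cont: "continuous_on {0..s} \<phi>"
    unfolding \<phi>_def by (intro continuous_intros)
  have deriv: "\<exists>d. (\<phi> has_real_derivative d) (at r) \<and> d \<le> 0" if "0 < r" "r < s" for r
  proof (intro exI conjI)
    have "(\<phi> has_real_derivative exp (- K * r) * (- K) * (g r + c / K) + exp (- K * r) * u r) (at r)"
      unfolding \<phi>_def using g'[of r] that s by (auto intro!: derivative_eq_intros)
    moreover have "exp (- K * r) * (- K) * (g r + c / K) + exp (- K * r) * u r
        = exp (- K * r) * (u r - c - K * g r)"
      using \<open>K > 0\<close> by (simp add: field_simps)
    ultimately show "(\<phi> has_real_derivative exp (- K * r) * (u r - c - K * g r)) (at r)"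
      by simp
    show "exp (- K * r) * (u r - c - K * g r) \<le> 0"
      using bound[of r] that s by (simp add: g_def mult_nonneg_nonpos)
  qed
  have "\<phi> s \<le> \<phi> 0"
    by (rule DERIV_nonpos_imp_decreasing_open[OF _ deriv cont]) (use s in simp)
  then have "exp (- K * s) * (g s + c / K) \<le> c / K"
    by (simp add: \<phi>_def g_def)
  then have "g s + c / K \<le> c / K * exp (K * s)"
    by (simp add: exp_minus field_simps)
  then have "K * (g s + c / K) \<le> K * (c / K * exp (K * s))"
    using \<open>K > 0\<close> by (intro mult_left_mono) auto
  then have "c + K * g s \<le> c * exp (K * s)"
    using \<open>K > 0\<close> by (simp add: distrib_left)
  then show ?thesis
    using bound[OF s] by (simp add: g_def)
qed

lemma norm_integral_diff_le_lipschitz: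
  fixes Y Z :: "real \<Rightarrow> 'a::real_normed_vector" and F G :: "'a \<Rightarrow> 'b::banach"
  assumes int: "(\<lambda>r. F (Y r) - G (Z r)) integrable_on {0..s}"
    and F: "K-lipschitz_on UNIV F"
    and agree: "\<And>r. 0 < r \<Longrightarrow> r \<le> s \<Longrightarrow> G (Z r) = F (Z r)"
    and cont: "continuous_on {0..s} (\<lambda>r. norm (Y r - Z r))"
  shows "norm (integral {0..s} (\<lambda>r. F (Y r) - G (Z r))) \<le> K * integral {0..s} (\<lambda>r. norm (Y r - Z r))"
proof -
  let ?D = "\<lambda>r. F (Y r) - F (Z r)"
  have D_eq: "F (Y r) - G (Z r) = ?D r" if "r \<in> {0..s} - {0}" for r
    using agree[of r] that by simp
  have "?D integrable_on {0..s}"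
    using int by (rule integrable_spike[OF _ negligible_sing[of 0]]) (simp add: D_eq)
  moreover have "(\<lambda>r. K * norm (Y r - Z r)) integrable_on {0..s}"
    using continuous_on_mult[OF continuous_on_const cont] by (rule integrable_continuous_real)
  moreover have "norm (?D r) \<le> K * norm (Y r - Z r)" for r
    using lipschitz_on_normD[OF F] by simp
  ultimately have "norm (integral {0..s} ?D) \<le> integral {0..s} (\<lambda>r. K * norm (Y r - Z r))"
    by (rule integral_norm_bound_integral)
  moreover have "integral {0..s} (\<lambda>r. F (Y r) - G (Z r)) = integral {0..s} ?D"
    by (rule integral_spike[OF negligible_sing[of 0]]) (simp add: D_eq)
  ultimately show ?thesis
    by simp
qed

lemma integral_equation_solutions_dist_le:
  fixes Y Z N :: "real \<Rightarrow> 'a::banach" and F G :: "'a \<Rightarrow> 'a"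
  assumes Y: "\<And>s. 0 \<le> s \<Longrightarrow> ((\<lambda>r. F (Y r)) has_integral (Y s - y - N s)) {0..s}"
    and Z: "\<And>s. 0 \<le> s \<Longrightarrow> ((\<lambda>r. G (Z r)) has_integral (Z s - z - N s)) {0..s}"
    and F: "K > 0" "K-lipschitz_on UNIV F"
    and agree: "\<And>r. 0 < r \<Longrightarrow> r \<le> t \<Longrightarrow> G (Z r) = F (Z r)"
    and s: "s \<in> {0..t}"
  shows "norm (Y s - Z s) \<le> norm (y - z) * exp (K * s)"
proof -
  define D where "D = (\<lambda>r. F (Y r) - G (Z r))"
  define u where "u = (\<lambda>s. norm (Y s - Z s))"
  have D: "(D has_integral (Y s - Z s - (y - z))) {0..s}" if "0 \<le> s" for s
  proof -
    have "(Y s - y - N s) - (Z s - z - N s) = Y s - Z s - (y - z)"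
      by (simp add: algebra_simps)
    then show ?thesis
      using has_integral_diff[OF Y[OF that] Z[OF that]] unfolding D_def by (simp only:)
  qed
  have Y_minus_Z: "Y s - Z s = (y - z) + integral {0..s} D" if "0 \<le> s" for s
    using integral_unique[OF D[OF that]] by (simp add: algebra_simps)
  have "continuous_on {0..t} (\<lambda>s. (y - z) + integral {0..s} D)"
    using D[of t] s by (intro continuous_intros indefinite_integral_continuous_1)
      (auto simp: integrable_on_def)
  then have "continuous_on {0..t} (\<lambda>s. Y s - Z s)"
    by (rule continuous_on_eq) (simp add: Y_minus_Z)
  then have u_cont: "continuous_on {0..t} u"
    unfolding u_def by (rule continuous_on_norm)
  have bound: "u s \<le> norm (y - z) + K * integral {0..s} u" if s: "s \<in> {0..t}" for s
  proof -
    have "D integrable_on {0..s}"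
      using D[of s] s by (auto simp: integrable_on_def)
    moreover have "continuous_on {0..s} u"
      using u_cont by (rule continuous_on_subset) (use s in auto)
    ultimately have "norm (integral {0..s} D) \<le> K * integral {0..s} u"
      unfolding D_def u_def using s agree
      by (intro norm_integral_diff_le_lipschitz[OF _ F(2)]) auto
    then show ?thesis
      using Y_minus_Z[of s] s norm_triangle_ineq[of "y - z" "integral {0..s} D"]
      by (simp add: u_def)
  qed
  have "u s \<le> norm (y - z) * exp (K * s)"
    by (rule gronwall_integral_le[OF u_cont F(1) norm_ge_zero bound s])
  then show ?thesis
    by (simp add: u_def)
qed

lemma exit_time_gt_imp_in_ball:
  assumes "ereal t < exit_time p r" "0 < s" "s \<le> t"
  shows "p s \<in> ball 0 r"
proof (rule ccontr)
  assume "p s \<notin> ball 0 r"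
  then have "exit_time p r \<le> ereal s"
    unfolding exit_time_def using \<open>0 < s\<close> by (intro Inf_lower) blast
  moreover have "ereal s \<le> ereal t" using \<open>s \<le> t\<close> by simp
  ultimately show False using assms(1) by (meson order_trans leD)
qed

lemma exit_time_geI:
  assumes "\<And>s. 0 < s \<Longrightarrow> s \<le> t \<Longrightarrow> p s \<in> ball 0 r"
  shows "ereal t \<le> exit_time p r"
  unfolding exit_time_def
proof (rule Inf_greatest)
  fix z assume "z \<in> {ereal s | s. 0 < s \<and> p s \<notin> ball 0 r}"
  then obtain s where "z = ereal s" "0 < s" "p s \<notin> ball 0 r" by blast
  with assms show "ereal t \<le> z" by (cases "s \<le> t") auto
qed

lemma exit_time_ge_if_close:
  assumes "ereal t < exit_time q r" and "\<And>s. 0 < s \<Longrightarrow> s \<le> t \<Longrightarrow> dist (p s) (q s) < \<delta>"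
  shows "ereal t \<le> exit_time p (r + \<delta>)"
proof (rule exit_time_geI)
  fix s assume "0 < s" "s \<le> t"
  then have "dist 0 (q s) < r" "dist (p s) (q s) < \<delta>"
    using assms exit_time_gt_imp_in_ball[OF assms(1)] by auto
  then show "p s \<in> ball 0 (r + \<delta>)"
    using dist_triangle2[of 0 "p s" "q s"] by simp
qed

lemma eventually_uniformly_close_if_dist_le:
  fixes x :: "'a::metric_space" and Q :: "'b \<Rightarrow> 'c::metric_space"
  assumes bound: "\<And>y s. s \<in> S \<Longrightarrow> dist (P y s) (Q s) \<le> C * dist y x" and "\<delta> > 0"
  shows "\<forall>\<^sub>F y in at x. \<forall>s\<in>S. dist (P y s) (Q s) < \<delta>"
  unfolding eventually_at
proof (intro exI conjI allI impI ballI)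
  show "\<delta> / (\<bar>C\<bar> + 1) > 0" using \<open>\<delta> > 0\<close> by simp
  fix y s assume y: "y \<noteq> x \<and> dist y x < \<delta> / (\<bar>C\<bar> + 1)" and "s \<in> S"
  then have "dist (P y s) (Q s) \<le> \<bar>C\<bar> * dist y x"
    using bound[of s y] by (smt (verit) mult_right_mono zero_le_dist)
  also have "\<dots> \<le> (\<bar>C\<bar> + 1) * dist y x" by (simp add: distrib_right)
  also have "\<dots> < \<delta>" using y by (simp add: field_simps)
  finally show "dist (P y s) (Q s) < \<delta>" .
qed

lemma Limsup_indicator_le_indicator:
  assumes "\<not> Q \<Longrightarrow> \<forall>\<^sub>F y in F. \<not> P y"
  shows "Limsup F (\<lambda>y. if P y then 1 else 0) \<le> (if Q then 1 else (0::ereal))"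
proof (cases Q)
  case False
  with assms have "\<forall>\<^sub>F y in F. (if P y then 1 else 0) \<le> (0::ereal)"
    by (auto elim: eventually_mono)
  with False show ?thesis by (simp add: Limsup_bounded)
qed (simp add: Limsup_bounded)

lemma eventually_exit_time_ge_cutoff_solutions:
  fixes Y :: "real^'n \<Rightarrow> real \<Rightarrow> real^'n" and Z N :: "real \<Rightarrow> real^'n"
    and h g :: "real^'n \<Rightarrow> real" and b :: "real^'n \<Rightarrow> real^'n"
  assumes h: "smooth_map h" "bounded {z. h z \<noteq> 0}" and b: "smooth_map b"
    and Y: "\<And>y s. 0 \<le> s \<Longrightarrow> ((\<lambda>r. h (Y y r) *\<^sub>R b (Y y r)) has_integral (Y y s - y - N s)) {0..s}"
    and Z: "\<And>s. 0 \<le> s \<Longrightarrow> ((\<lambda>r. g (Z r) *\<^sub>R b (Z r)) has_integral (Z s - x - N s)) {0..s}"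
    and agree: "\<And>z. norm z < R \<Longrightarrow> g z = h z"
    and stays: "ereal t < exit_time Z R" and "\<delta> > 0"
  shows "\<forall>\<^sub>F y in at x. ereal t \<le> exit_time (Y y) (R + \<delta>)"
proof -
  obtain K where K: "K > 0" "K-lipschitz_on UNIV (\<lambda>z. h z *\<^sub>R b z)"
    using lipschitz_on_scaleR_bounded_support[OF h(1) b h(2)] .
  have agree_on_Z: "g (Z r) = h (Z r)" if "0 < r" "r \<le> t" for r
    using exit_time_gt_imp_in_ball[OF stays that] agree by simp
  have "dist (Y y s) (Z s) \<le> exp (K * t) * dist y x" if "s \<in> {0..t}" for y s
  proof -
    have "dist (Y y s) (Z s) \<le> dist y x * exp (K * s)"
      using integral_equation_solutions_dist_le[where F = "\<lambda>z. h z *\<^sub>R b z"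
          and G = "\<lambda>z. g z *\<^sub>R b z", OF Y Z K _ that] agree_on_Z by (simp add: dist_norm)
    also have "\<dots> \<le> exp (K * t) * dist y x"
      using that K by (simp add: mult.commute mult_left_mono)
    finally show ?thesis .
  qed
  then have "\<forall>\<^sub>F y in at x. \<forall>s\<in>{0..t}. dist (Y y s) (Z s) < \<delta>"
    using \<open>\<delta> > 0\<close> by (intro eventually_uniformly_close_if_dist_le) auto
  then show ?thesis
    by (rule eventually_mono) (auto intro: exit_time_ge_if_close[OF stays])
qed

theorem lemma4p2:
  fixes M :: "'w measure"
    and b :: "real^'d \<Rightarrow> real^'d"
    and A1 A2 :: "real^'d^'d"
    and W L :: "real \<Rightarrow> 'w \<Rightarrow> real^'d"
    and h :: "nat \<Rightarrow> real^'d \<Rightarrow> real"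
    and X :: "nat \<Rightarrow> real^'d \<Rightarrow> real \<Rightarrow> 'w \<Rightarrow> real^'d"
    and x :: "real^'d" and l :: nat and t :: real
  assumes b_smooth: "smooth_map b"
    and W_bm: "brownian_motion M W"
    and L_levy: "pure_jump_levy_process M L"
    and h_smooth: "\<And>k. k \<ge> 1 \<Longrightarrow> smooth_map (h k)"
    and h_supp: "\<And>k. k \<ge> 1 \<Longrightarrow> bounded {z. h k z \<noteq> 0}"
    and h_one: "\<And>k z. k \<ge> 1 \<Longrightarrow> norm z \<le> real k \<Longrightarrow> h k z = 1"
    and X_sol: "\<And>k y \<omega> s. k \<ge> 1 \<Longrightarrow> \<omega> \<in> space M \<Longrightarrow> 0 \<le> s \<Longrightarrow>
        ((\<lambda>r. h k (X k y r \<omega>) *\<^sub>R b (X k y r \<omega>)) has_integral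
           (X k y s \<omega> - y - A1 *v W s \<omega> - A2 *v L s \<omega>)) {0..s}"
    and l2: "l \<ge> 2"
    and tpos: "t > 0"
  shows "AE \<omega> in M.
     Limsup (at x) (\<lambda>y. if ereal t > exit_time (\<lambda>s. X l y s \<omega>) (real l) then 1 else (0::ereal))
       \<le> (if ereal t \<ge> exit_time (\<lambda>s. X (l - 1) x s \<omega>) (real (l - 1)) then 1 else 0)"
proof (rule AE_I2)
  fix \<omega> assume \<omega>: "\<omega> \<in> space M"
  let ?exit = "\<lambda>k y. exit_time (\<lambda>s. X k y s \<omega>) (real k)"
  show "Limsup (at x) (\<lambda>y. if ereal t > ?exit l y then 1 else 0)
    \<le> (if ereal t \<ge> ?exit (l - 1) x then 1 else (0::ereal))"
  proof (rule Limsup_indicator_le_indicator)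
    assume "\<not> ereal t \<ge> ?exit (l - 1) x"
    then have stays: "ereal t < ?exit (l - 1) x" by simp
    have l: "l \<ge> 1" "l - 1 \<ge> 1" using l2 by auto
    have sol: "((\<lambda>r. h k (X k y r \<omega>) *\<^sub>R b (X k y r \<omega>)) has_integral
        (X k y s \<omega> - y - (A1 *v W s \<omega> + A2 *v L s \<omega>))) {0..s}" if "k \<ge> 1" "0 \<le> s" for k y s
      using X_sol[OF that(1) \<omega> that(2)] by (simp add: diff_diff_eq add.assoc)
    have "h (l - 1) z = h l z" if "norm z < real (l - 1)" for z
      using h_one[OF l(1)] h_one[OF l(2)] that by simp
    from eventually_exit_time_ge_cutoff_solutions[OF h_smooth[OF l(1)] h_supp[OF l(1)] b_smooth
        sol[OF l(1)] sol[OF l(2)] this stays zero_less_one]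
    show "\<forall>\<^sub>F y in at x. \<not> ereal t > ?exit l y"
      using l(1) by (simp add: of_nat_diff not_less)
  qed
qed

end
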